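(* Assume $0<A,B\le1$ and $B\ge B_0(A)$, and let $U$ satisfy $G_{A,B}(U)=0$ and $L(A,B)\le U\le R(A,B)$. Then \[ (A+B)(1-U)+B\kappa M(U)+A\varepsilon N(U)\ge\tfrac12\sqrt{2(1+AB)} \] and \[ (A+B)U+B\kappa M(U)+A\varepsilon N(U)\ge\tfrac12\sqrt{2(1+AB)} . \]
   Context: For $0<A,B\le1$ put $\kappa=\sqrt{1-A^2}$, $\varepsilon=\sqrt{1-B^2}$, $P=P(A,B)=\frac{1+AB}{B(A+B)}$, $M(U)=\kappa(P-U)$, $N(U)=\varepsilon\left(U+\frac{\kappa^2}{A(A+B)}\right)$, and $G_{A,B}(U)=B\cos(\pi M(U))-A\cos(\pi N(U))-(A+B)\cos(\pi U)$. Further $L(A,B)=\frac{\kappa}{1+\kappa}\frac{1+AB}{B(A+B)}$, $R(A,B)=\frac{1-\varepsilon\kappa^2/[A(A+B)]}{1+\varepsilon}$, and $B_0(A)=\frac{-A(1-\kappa)+\sqrt{A^2(1-\kappa)^2+8\kappa(1+\kappa)}}{2(1+\kappa)}$. *)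

theory Defs
  imports Complex_Main
begin

definition kap :: "real \<Rightarrow> real" where "kap A = sqrt (1 - A^2)"
definition eps :: "real \<Rightarrow> real" where "eps B = sqrt (1 - B^2)"
definition PP :: "real \<Rightarrow> real \<Rightarrow> real" where
  "PP A B = (1 + A*B) / (B*(A+B))"
definition MM :: "real \<Rightarrow> real \<Rightarrow> real \<Rightarrow> real" where
  "MM A B U = kap A * (PP A B - U)"
definition NN :: "real \<Rightarrow> real \<Rightarrow> real \<Rightarrow> real" where
  "NN A B U = eps B * (U + (kap A)^2 / (A*(A+B)))"
definition GG :: "real \<Rightarrow> real \<Rightarrow> real \<Rightarrow> real" where
  "GG A B U = B * cos (pi * MM A B U) - A * cos (pi * NN A B U) - (A+B) * cos (pi * U)"
definition LL :: "real \<Rightarrow> real \<Rightarrow> real" where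
  "LL A B = kap A / (1 + kap A) * ((1 + A*B) / (B*(A+B)))"
definition RR :: "real \<Rightarrow> real \<Rightarrow> real" where
  "RR A B = (1 - eps B * (kap A)^2 / (A*(A+B))) / (1 + eps B)"
definition B0 :: "real \<Rightarrow> real" where
  "B0 A = (- A * (1 - kap A) + sqrt (A^2 * (1 - kap A)^2 + 8 * kap A * (1 + kap A))) / (2 * (1 + kap A))"

end

(* Write S = A + B and D = 2 + AB - B^2. Since kappa^2 = 1 - A^2 and epsilon^2 = 1 - B^2,
   the second left-hand side equals D ((1 - A^2)/S + A U), which is increasing in U, while
   sqrt (2 (1 + AB)) / 2 <= (3 + AB)/4 by AM-GM; so it suffices that U is not much below 1/2.
   For U < 1/2 the equation G = 0, together with cos (pi M) <= 1 and
   cos (pi N) >= 1 - pi^2 N^2 / 2, gives S sin (pi (1/2 - U)) <= B - A + (pi^2/2) A N^2, and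
   sin x >= x - x^3/6 turns this into a polynomial constraint. Combined with U >= L(A,B) it
   rules out U <= 3/10, and on [3/10, 1/2] it linearises to exactly the bound needed. Each
   polynomial inequality is certified by an expansion with nonnegative coefficients in
   products of powers of the distances to the sides of a box.
   The first inequality is the second one for (B, A, 1 - U): this swap exchanges M and N,
   negates G and maps L(B,A) to 1 - R(A,B). *)

theory Submission
  imports Defs "HOL-Analysis.Complex_Transcendental"
begin

lemma kap_nonneg: "\<bar>A\<bar> \<le> 1 \<Longrightarrow> 0 \<le> kap A"
  by (simp add: kap_def abs_square_le_1)

lemma kap_le_one: "kap A \<le> 1"
  by (simp add: kap_def)

lemma kap_squared: "\<bar>A\<bar> \<le> 1 \<Longrightarrow> (kap A)^2 = 1 - A^2"
  by (simp add: kap_def abs_square_le_1)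

lemma eps_eq_kap: "eps = kap"
  by (simp add: fun_eq_iff eps_def kap_def)

lemma PP_ge_one:
  assumes "0 < A" "0 < B" "B \<le> 1"
  shows "1 \<le> PP A B"
proof -
  have "B*(A+B) \<le> 1 + A*B"
    using assms by (simp add: algebra_simps power2_eq_square mult_le_one)
  then show ?thesis
    using assms by (simp add: PP_def)
qed

lemma PP_swap_eq:
  assumes "0 < A" "0 < B"
  shows "PP B A = 1 + (1-A^2)/(A*(A+B))"
proof -
  have "A * (A+B) \<noteq> 0"
    using assms by simp
  then show ?thesis
    by (simp add: PP_def field_simps power2_eq_square)
qed

lemma LL_nonneg:
  assumes "0 < A" "A \<le> 1" "0 < B" "B \<le> 1"
  shows "0 \<le> LL A B"
  using assms kap_nonneg[of A] PP_ge_one[of A B] by (simp add: LL_def PP_def)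

lemma NN_squared:
  assumes "\<bar>A\<bar> \<le> 1" "\<bar>B\<bar> \<le> 1"
  shows "(NN A B U)^2 = (1-B^2)*(U + (1-A^2)/(A*(A+B)))^2"
  using assms by (simp add: NN_def eps_eq_kap kap_squared power_mult_distrib)

lemma objective_factor_pos:
  fixes A B :: real
  assumes "0 \<le> A" "0 \<le> B" "B \<le> 1"
  shows "0 < 2 + A*B - B^2"
  using mult_nonneg_nonneg[OF assms(1,2)] power_le_one[OF assms(2,3), of 2] by linarith

lemma objective_eq:
  fixes A B U :: real
  assumes "0 < A" "A \<le> 1" "0 < B" "B \<le> 1"
  shows "(A+B)*U + B * kap A * MM A B U + A * eps B * NN A B U
    = (2 + A*B - B^2) * ((1-A^2)/(A+B) + A*U)"
proof -
  have kk: "kap A * kap A = 1 - A^2"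
    using assms kap_squared[of A] by (simp add: power2_eq_square)
  have ee: "eps B * eps B = 1 - B^2"
    using assms kap_squared[of B] by (simp add: eps_eq_kap power2_eq_square)
  have "B * kap A * MM A B U = B * (kap A * kap A) * (PP A B - U)"
    by (simp add: MM_def mult_ac)
  also have "\<dots> = B * (1-A^2) * (PP A B - U)"
    by (simp only: kk)
  also have "\<dots> = (1-A^2)*(B * PP A B) - B*(1-A^2)*U"
    by (simp add: algebra_simps)
  also have "\<dots> = (1-A^2)*(1+A*B)/(A+B) - B*(1-A^2)*U"
    using assms by (simp add: PP_def)
  finally have M: "B * kap A * MM A B U = (1-A^2)*(1+A*B)/(A+B) - B*(1-A^2)*U" .
  have "A * eps B * NN A B U = A * (eps B * eps B) * (U + (kap A)^2/(A*(A+B)))"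
    by (simp add: NN_def mult_ac)
  also have "\<dots> = A * (1-B^2) * (U + (1-A^2)/(A*(A+B)))"
    by (simp only: ee kk power2_eq_square)
  also have "\<dots> = A*(1-B^2)*U + (1-B^2)*(A*((1-A^2)/(A*(A+B))))"
    by (simp add: algebra_simps)
  also have "\<dots> = (1-B^2)*(1-A^2)/(A+B) + A*(1-B^2)*U"
    using assms by simp
  finally have N: "A * eps B * NN A B U = (1-B^2)*(1-A^2)/(A+B) + A*(1-B^2)*U" .
  have "(1-A^2)*(1+A*B)/(A+B) + (1-B^2)*(1-A^2)/(A+B) = (2 + A*B - B^2) * ((1-A^2)/(A+B))"
    by (simp add: add_divide_distrib[symmetric] algebra_simps)
  moreover have "(A+B)*U - B*(1-A^2)*U + A*(1-B^2)*U = (2 + A*B - B^2) * (A*U)"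
    by (simp add: algebra_simps power2_eq_square)
  ultimately show ?thesis
    unfolding M N by (simp add: algebra_simps)
qed

lemma sqrt_two_mult_le:
  assumes "-3 \<le> (x::real)"
  shows "sqrt (2*(1+x)) / 2 \<le> (3+x)/4"
proof -
  have "sqrt (2*(1+x)) \<le> (3+x)/2"
  proof (rule real_le_lsqrt)
    show "0 \<le> (3+x)/2"
      using assms by simp
    show "2*(1+x) \<le> ((3+x)/2)^2"
      using zero_le_power2[of "1-x"] by (simp add: power2_eq_square algebra_simps)
  qed
  then show ?thesis
    by simp
qed

lemma quarter_le_objective_iff:
  fixes A B U :: real
  assumes "0 < A + B"
  shows "(3 + A*B)/4 \<le> (2 + A*B - B^2) * ((1-A^2)/(A+B) + A*U) \<longleftrightarrow>
    4*(2 + A*B - B^2)*A*(A+B)*(1/2 - U)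
      \<le> 4*(1-A^2)*(2+A*B-B^2) + 2*A*(A+B)*(2+A*B-B^2) - (A+B)*(3+A*B)"
proof -
  define Y where "Y = (2 + A*B - B^2) * ((1-A^2) + A*U*(A+B))"
  have "(2 + A*B - B^2) * ((1-A^2)/(A+B) + A*U) = Y/(A+B)"
    using assms by (simp add: Y_def field_simps)
  moreover have "(3 + A*B)/4 \<le> Y/(A+B) \<longleftrightarrow> (3 + A*B)*(A+B) \<le> 4*Y"
    using assms by (simp add: field_simps)
  moreover have "4*Y - (3 + A*B)*(A+B) = 4*(1-A^2)*(2+A*B-B^2) + 2*A*(A+B)*(2+A*B-B^2)
      - (A+B)*(3+A*B) - 4*(2 + A*B - B^2)*A*(A+B)*(1/2 - U)"
    by (simp add: Y_def algebra_simps)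
  ultimately show ?thesis
    by linarith
qed

lemma cos_ge_one_minus_sq_half: "1 - x^2/2 \<le> cos (x::real)"
proof -
  have "cos x = 1 - 2 * sin (x/2) ^ 2"
    using cos_double_sin[of "x/2"] by simp
  moreover have "sin (x/2) ^ 2 \<le> (x/2)^2"
    using abs_sin_x_le_abs_x[of "x/2"] by (metis abs_le_square_iff)
  ultimately show ?thesis
    by (simp add: power2_eq_square)
qed

lemma sin_ge_x_minus_cube_sixth:
  assumes "0 \<le> (x::real)"
  shows "x - x^3/6 \<le> sin x"
proof -
  let ?f = "\<lambda>t::real. sin t - t + t^3/6"
  have "?f 0 \<le> ?f x"
  proof (rule DERIV_nonneg_imp_nondecreasing[OF assms])
    fix t :: real
    have "DERIV ?f t :> cos t - 1 + t^2/2"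
      by (auto intro!: derivative_eq_intros simp: algebra_simps)
    then show "\<exists>y. DERIV ?f t :> y \<and> 0 \<le> y"
      using cos_ge_one_minus_sq_half[of t] by force
  qed
  then show ?thesis
    by simp
qed

(* The constants below satisfy 157/50 <= pi, pi^2/2 <= 247/50 and pi^3/6 <= 517/100. *)

lemma cos_pi_mult_ge: "1 - (247/50) * x^2 \<le> cos (pi * (x::real))"
proof -
  have "pi^2 \<le> (31416/10000)^2"
    using pi_approx by (intro power_mono) auto
  also have "\<dots> \<le> 247/25"
    by (simp add: power2_eq_square)
  finally have "pi^2 * x^2 \<le> (247/25) * x^2"
    by (rule mult_right_mono) simp
  then show ?thesis
    using cos_ge_one_minus_sq_half[of "pi*x"] by (simp add: power_mult_distrib)
qed

lemma sin_pi_mult_ge: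
  assumes "0 \<le> (w::real)"
  shows "(157/50)*w - (517/100)*w^3 \<le> sin (pi*w)"
proof -
  have "pi^3 \<le> (31416/10000)^3"
    using pi_approx by (intro power_mono) auto
  also have "\<dots> \<le> 3102/100"
    by (simp add: power3_eq_cube)
  finally have "pi^3 * w^3 \<le> (3102/100) * w^3"
    by (rule mult_right_mono) (use assms in simp)
  moreover have "(157/50)*w \<le> pi * w"
    using pi_approx assms by (intro mult_right_mono) auto
  ultimately show ?thesis
    using assms sin_ge_x_minus_cube_sixth[of "pi*w"] by (simp add: power_mult_distrib)
qed

lemma margin_poly_nonneg:
  fixes A B :: real
  assumes "0 \<le> A" "A \<le> 1" "0 \<le> B" "B \<le> 1"
  shows "0 \<le> 4*(1-A^2)*(2+A*B-B^2) + 2*A*(A+B)*(2+A*B-B^2) - (A+B)*(3+A*B)" (is "0 \<le> ?p")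
proof -
  have "?p =
    8 * (1 - A)^3 * (1 - B)^3
    + 21 * (1 - A)^3 * B * (1 - B)^2
    + 14 * (1 - A)^3 * B^2 * (1 - B)
    + (1 - A)^3 * B^3
    + 21 * A * (1 - A)^2 * (1 - B)^3
    + 62 * A * (1 - A)^2 * B * (1 - B)^2
    + 48 * A * (1 - A)^2 * B^2 * (1 - B)
    + 5 * A * (1 - A)^2 * B^3
    + 14 * A^2 * (1 - A) * (1 - B)^3
    + 48 * A^2 * (1 - A) * B * (1 - B)^2
    + 44 * A^2 * (1 - A) * B^2 * (1 - B)
    + 6 * A^2 * (1 - A) * B^3
    + A^3 * (1 - B)^3
    + 5 * A^3 * B * (1 - B)^2
    + 6 * A^3 * B^2 * (1 - B)" (is "_ = ?c")
    by algebra
  moreover have "0 \<le> ?c"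
    by (intro add_nonneg_nonneg mult_nonneg_nonneg zero_le_power) (use assms in auto)
  ultimately show ?thesis
    by simp
qed

lemma linearised_margin_poly_nonneg:
  fixes A B :: real
  assumes "0 \<le> A" "A \<le> 1" "0 \<le> B" "B \<le> 1"
  shows "0 \<le> ((A+B)^2*(7333/2500) + (247/50)*(1-B^2)*((4/5)*A*(A+B) + 2*(1-A^2))) * (4*(1-A^2)*(2+A*B-B^2) + 2*A*(A+B)*(2+A*B-B^2) - (A+B)*(3+A*B)) - 4*(2+A*B-B^2)*((B-A)*A*(A+B)^2 + (247/50)*(1-B^2)*((1/2)*A*(A+B) + (1-A^2))^2)" (is "0 \<le> ?p")
proof -
  have "2500 * ?p =
    98800 * (1 - A)^5 * (1 - B)^6
    + 518700 * (1 - A)^5 * B * (1 - B)^5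
    + 1021964 * (1 - A)^5 * B^2 * (1 - B)^4
    + 928957 * (1 - A)^5 * B^3 * (1 - B)^3
    + 380155 * (1 - A)^5 * B^4 * (1 - B)^2
    + 60595 * (1 - A)^5 * B^5 * (1 - B)
    + 7333 * (1 - A)^5 * B^6
    + 419900 * A * (1 - A)^4 * (1 - B)^6
    + 2394668 * A * (1 - A)^4 * B * (1 - B)^5
    + 5180923 * A * (1 - A)^4 * B^2 * (1 - B)^4
    + 5247557 * A * (1 - A)^4 * B^3 * (1 - B)^3
    + 2452660 * A * (1 - A)^4 * B^4 * (1 - B)^2
    + 467255 * A * (1 - A)^4 * B^5 * (1 - B)
    + 55997 * A * (1 - A)^4 * B^6
    + 631704 * A^2 * (1 - A)^3 * (1 - B)^6
    + 3956419 * A^2 * (1 - A)^3 * B * (1 - B)^5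
    + 9497071 * A^2 * (1 - A)^3 * B^2 * (1 - B)^4
    + 10805345 * A^2 * (1 - A)^3 * B^3 * (1 - B)^3
    + 5789917 * A^2 * (1 - A)^3 * B^4 * (1 - B)^2
    + 1309508 * A^2 * (1 - A)^3 * B^5 * (1 - B)
    + 159990 * A^2 * (1 - A)^3 * B^6
    + 386173 * A^3 * (1 - A)^2 * (1 - B)^6
    + 2734335 * A^3 * (1 - A)^2 * B * (1 - B)^5
    + 7457311 * A^3 * (1 - A)^2 * B^2 * (1 - B)^4
    + 9686729 * A^3 * (1 - A)^2 * B^3 * (1 - B)^3
    + 5981768 * A^3 * (1 - A)^2 * B^4 * (1 - B)^2
    + 1584610 * A^3 * (1 - A)^2 * B^5 * (1 - B)
    + 202652 * A^3 * (1 - A)^2 * B^6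
    + 88082 * A^4 * (1 - A) * (1 - B)^6
    + 743560 * A^4 * (1 - A) * B * (1 - B)^5
    + 2376866 * A^4 * (1 - A) * B^2 * (1 - B)^4
    + 3561596 * A^4 * (1 - A) * B^3 * (1 - B)^3
    + 2495350 * A^4 * (1 - A) * B^4 * (1 - B)^2
    + 728904 * A^4 * (1 - A) * B^5 * (1 - B)
    + 95992 * A^4 * (1 - A) * B^6
    + 12513 * A^5 * (1 - B)^6
    + 102300 * A^5 * B * (1 - B)^5
    + 320787 * A^5 * B^2 * (1 - B)^4
    + 470562 * A^5 * B^3 * (1 - B)^3
    + 305364 * A^5 * B^4 * (1 - B)^2
    + 58392 * A^5 * B^5 * (1 - B)" (is "_ = ?c")
    by algebra
  moreover have "0 \<le> ?c"
    by (intro add_nonneg_nonneg mult_nonneg_nonneg zero_le_power) (use assms in auto)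
  ultimately show ?thesis
    by (simp add: zero_le_mult_iff)
qed

lemma far_poly_pos_large_B:
  fixes A B :: real
  assumes "4/5 \<le> A" "A \<le> 1" "5/8 \<le> B" "B \<le> 1"
  shows "0 < A*(A+B)^3*(7333/12500) - (B-A)*A*(A+B)^2 - (247/50)*(1-B^2)*((3/10)*A*(A+B) + (1-A^2))^2" (is "0 < ?p")
proof -
  have "324000000000 * ?p =
    51455647791
    + 1757855923200000 * (1 - A)^4 * (8*B - 5) * (1 - B)^3
    + 753878098800000 * (1 - A)^4 * (8*B - 5)^2 * (1 - B)^2
    + 107852001300000 * (1 - A)^4 * (8*B - 5)^3 * (1 - B)
    + 5149534640625 * (1 - A)^4 * (8*B - 5)^4
    + 4455041509632000 * (5*A - 4) * (1 - A)^3 * (1 - B)^4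
    + 3601731070656000 * (5*A - 4) * (1 - A)^3 * (8*B - 5) * (1 - B)^3
    + 1002773760768000 * (5*A - 4) * (1 - A)^3 * (8*B - 5)^2 * (1 - B)^2
    + 118107459024000 * (5*A - 4) * (1 - A)^3 * (8*B - 5)^3 * (1 - B)
    + 5054727424500 * (5*A - 4) * (1 - A)^3 * (8*B - 5)^4
    + 2851124235641600 * (5*A - 4)^2 * (1 - A)^2 * (1 - B)^4
    + 1835552770700800 * (5*A - 4)^2 * (1 - A)^2 * (8*B - 5) * (1 - B)^3
    + 439984926566400 * (5*A - 4)^2 * (1 - A)^2 * (8*B - 5)^2 * (1 - B)^2
    + 46658993387200 * (5*A - 4)^2 * (1 - A)^2 * (8*B - 5)^3 * (1 - B)
    + 1850853843350 * (5*A - 4)^2 * (1 - A)^2 * (8*B - 5)^4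
    + 607727061050880 * (5*A - 4)^3 * (1 - A) * (1 - B)^4
    + 359577216445440 * (5*A - 4)^3 * (1 - A) * (8*B - 5) * (1 - B)^3
    + 80106468203520 * (5*A - 4)^3 * (1 - A) * (8*B - 5)^2 * (1 - B)^2
    + 7975323576960 * (5*A - 4)^3 * (1 - A) * (8*B - 5)^3 * (1 - B)
    + 299813301780 * (5*A - 4)^3 * (1 - A) * (8*B - 5)^4
    + 43143700044544 * (5*A - 4)^4 * (1 - B)^4
    + 24499792182272 * (5*A - 4)^4 * (8*B - 5) * (1 - B)^3
    + 5239689634176 * (5*A - 4)^4 * (8*B - 5)^2 * (1 - B)^2
    + 501233442848 * (5*A - 4)^4 * (8*B - 5)^3 * (1 - B)
    + 18137225089 * (5*A - 4)^4 * (8*B - 5)^4" (is "_ = ?c")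
    by algebra
  moreover have "0 < ?c"
    by (intro add_pos_nonneg mult_nonneg_nonneg zero_le_power) (use assms in auto)
  ultimately show ?thesis
    by (simp add: zero_less_mult_iff)
qed

lemma far_poly_pos_large_A:
  fixes A B :: real
  assumes "9/10 \<le> A" "A \<le> 1" "0 \<le> B" "B \<le> 5/8"
  shows "0 < A*(A+B)^3*(7333/12500) - (B-A)*A*(A+B)^2 - (247/50)*(1-B^2)*((3/10)*A*(A+B) + (1-A^2))^2" (is "0 < ?p")
proof -
  have "156250000000 * ?p =
    17937319375
    + 10711386000000 * (1 - A)^4 * B * (5 - 8*B)^3
    + 330923567750000 * (1 - A)^4 * B^2 * (5 - 8*B)^2
    + 3482893097000000 * (1 - A)^4 * B^3 * (5 - 8*B)
    + 12730962947000000 * (1 - A)^4 * B^4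
    + 250424316000 * (10*A - 9) * (1 - A)^3 * (5 - 8*B)^4
    + 13396178712000 * (10*A - 9) * (1 - A)^3 * B * (5 - 8*B)^3
    + 251871251744000 * (10*A - 9) * (1 - A)^3 * B^2 * (5 - 8*B)^2
    + 2060838801868000 * (10*A - 9) * (1 - A)^3 * B^3 * (5 - 8*B)
    + 6437638930536000 * (10*A - 9) * (1 - A)^3 * B^4
    + 75843033400 * (10*A - 9)^2 * (1 - A)^2 * (5 - 8*B)^4
    + 3415391268800 * (10*A - 9)^2 * (1 - A)^2 * B * (5 - 8*B)^3
    + 56404688875600 * (10*A - 9)^2 * (1 - A)^2 * B^2 * (5 - 8*B)^2
    + 414218068303200 * (10*A - 9)^2 * (1 - A)^2 * B^3 * (5 - 8*B)
    + 1179454316956400 * (10*A - 9)^2 * (1 - A)^2 * B^4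
    + 7648371560 * (10*A - 9)^3 * (1 - A) * (5 - 8*B)^4
    + 323858689920 * (10*A - 9)^3 * (1 - A) * B * (5 - 8*B)^3
    + 5047607379040 * (10*A - 9)^3 * (1 - A) * B^2 * (5 - 8*B)^2
    + 34954319554880 * (10*A - 9)^3 * (1 - A) * B^3 * (5 - 8*B)
    + 93715416009760 * (10*A - 9)^3 * (1 - A) * B^4
    + 256810289 * (10*A - 9)^4 * (5 - 8*B)^4
    + 10556329248 * (10*A - 9)^4 * B * (5 - 8*B)^3
    + 159486250976 * (10*A - 9)^4 * B^2 * (5 - 8*B)^2
    + 1065782271872 * (10*A - 9)^4 * B^3 * (5 - 8*B)
    + 2741552493744 * (10*A - 9)^4 * B^4" (is "_ = ?c")
    by algebra
  moreover have "0 < ?c"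
    by (intro add_pos_nonneg mult_nonneg_nonneg zero_le_power) (use assms in auto)
  ultimately show ?thesis
    by (simp add: zero_less_mult_iff)
qed

lemma region_poly_pos:
  fixes A B :: real
  assumes "4/5 \<le> A" "A \<le> 9/10" "0 \<le> B" "B \<le> 5/8"
  shows "0 < (1-A^2)*(1+A*B)^2 - (9/25)*B^2*(A+B)^2" (is "0 < ?p")
proof -
  have "64000000 * ?p =
    8756875
    + 22853 * (9 - 10*A)^4 * (5 - 8*B)^4
    + 1026208 * (9 - 10*A)^4 * B * (5 - 8*B)^3
    + 15853440 * (9 - 10*A)^4 * B^2 * (5 - 8*B)^2
    + 96053248 * (9 - 10*A)^4 * B^3 * (5 - 8*B)
    + 162578432 * (9 - 10*A)^4 * B^4
    + 150056 * (5*A - 4) * (9 - 10*A)^3 * (5 - 8*B)^4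
    + 6972672 * (5*A - 4) * (9 - 10*A)^3 * B * (5 - 8*B)^3
    + 109198336 * (5*A - 4) * (9 - 10*A)^3 * B^2 * (5 - 8*B)^2
    + 654909440 * (5*A - 4) * (9 - 10*A)^3 * B^3 * (5 - 8*B)
    + 1021640704 * (5*A - 4) * (9 - 10*A)^3 * B^4
    + 347768 * (5*A - 4)^2 * (9 - 10*A)^2 * (5 - 8*B)^4
    + 16977664 * (5*A - 4)^2 * (9 - 10*A)^2 * B * (5 - 8*B)^3
    + 270447616 * (5*A - 4)^2 * (9 - 10*A)^2 * B^2 * (5 - 8*B)^2
    + 1591672832 * (5*A - 4)^2 * (9 - 10*A)^2 * B^3 * (5 - 8*B)
    + 2139881472 * (5*A - 4)^2 * (9 - 10*A)^2 * B^4
    + 321696 * (5*A - 4)^3 * (9 - 10*A) * (5 - 8*B)^4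
    + 17069056 * (5*A - 4)^3 * (9 - 10*A) * B * (5 - 8*B)^3
    + 278458368 * (5*A - 4)^3 * (9 - 10*A) * B^2 * (5 - 8*B)^2
    + 1578860544 * (5*A - 4)^3 * (9 - 10*A) * B^3 * (5 - 8*B)
    + 1493958656 * (5*A - 4)^3 * (9 - 10*A) * B^4
    + 87120 * (5*A - 4)^4 * (5 - 8*B)^4
    + 5589504 * (5*A - 4)^4 * B * (5 - 8*B)^3
    + 95053824 * (5*A - 4)^4 * B^2 * (5 - 8*B)^2
    + 493387776 * (5*A - 4)^4 * B^3 * (5 - 8*B)" (is "_ = ?c")
    by algebra
  moreover have "0 < ?c"
    by (intro add_pos_nonneg mult_nonneg_nonneg zero_le_power) (use assms in auto)
  ultimately show ?thesis
    by (simp add: zero_less_mult_iff)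
qed

lemma GG_zero_imp_sin_bound:
  fixes A B U :: real
  assumes "0 < A" "0 < B" "GG A B U = 0" "U \<le> 1/2"
  shows "(A+B)*((157/50)*(1/2-U) - (517/100)*(1/2-U)^3) \<le> B - A + (247/50)*A*(NN A B U)^2"
proof -
  have "(A+B)*((157/50)*(1/2-U) - (517/100)*(1/2-U)^3) \<le> (A+B) * sin (pi*(1/2-U))"
    using sin_pi_mult_ge[of "1/2-U"] assms by (intro mult_left_mono) auto
  also have "\<dots> = (A+B) * cos (pi*U)"
    by (simp add: cos_sin_eq algebra_simps)
  also have "\<dots> = B * cos (pi * MM A B U) - A * cos (pi * NN A B U)"
    using assms(3) by (simp add: GG_def)
  also have "\<dots> \<le> B - A*(1 - (247/50)*(NN A B U)^2)"
    using assms cos_pi_mult_ge[of "NN A B U"] by (intro diff_mono mult_left_mono) auto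
  finally show ?thesis
    by (simp add: algebra_simps)
qed

lemma LL_le_imp_region:
  assumes "0 < A" "A \<le> 1" "0 < B" "B \<le> 1" "LL A B \<le> 3/10"
  shows "4/5 \<le> A" "(1-A^2)*(1+A*B)^2 \<le> (9/25)*B^2*(A+B)^2"
proof -
  define k P where "k = kap A" and "P = PP A B"
  have k0: "0 \<le> k" and k1: "k \<le> 1" and kk: "k^2 = 1 - A^2"
    using assms kap_nonneg kap_le_one kap_squared by (auto simp: k_def)
  have P1: "1 \<le> P"
    using PP_ge_one assms by (simp add: P_def)
  have "k/(1+k)*P \<le> 3/10"
    using assms(5) by (simp add: LL_def k_def P_def PP_def)
  then have "k*P \<le> 3/10*(1+k)"
    using k0 by (simp add: pos_divide_le_eq)
  have "(1-A^2)*P^2 = (k*P)^2"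
    by (simp add: power_mult_distrib kk)
  also have "\<dots> \<le> (3/5)^2"
    using \<open>k*P \<le> 3/10*(1+k)\<close> k0 k1 P1 by (intro power_mono) auto
  finally have kP2: "(1-A^2)*P^2 \<le> 9/25"
    by (simp add: power2_eq_square)
  moreover have "(1-A^2)*1 \<le> (1-A^2)*P^2"
    using P1 assms by (intro mult_left_mono one_le_power) (auto simp: power_le_one)
  ultimately have "(4/5)^2 \<le> A^2"
    by (simp add: power2_eq_square)
  then show "4/5 \<le> A"
    using assms(1) by (simp add: power_mono_iff)
  have "P^2 = (1+A*B)^2/(B^2*(A+B)^2)"
    by (simp add: P_def PP_def power_divide power_mult_distrib)
  then show "(1-A^2)*(1+A*B)^2 \<le> (9/25)*B^2*(A+B)^2"
    using kP2 assms by (simp add: divide_le_eq mult.assoc)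
qed

lemma far_case_impossible:
  fixes A B :: real
  assumes "4/5 \<le> A" "A \<le> 1" "0 \<le> B" "B \<le> 1"
    and region: "(1-A^2)*(1+A*B)^2 \<le> (9/25)*B^2*(A+B)^2"
    and far: "A*(A+B)^3*(7333/12500) \<le> (B-A)*A*(A+B)^2 + (247/50)*(1-B^2)*((3/10)*A*(A+B) + (1-A^2))^2"
  shows False
proof (cases "5/8 \<le> B")
  case True
  then show False
    using far_poly_pos_large_B[of A B] assms by linarith
next
  case False
  then show False
    using far_poly_pos_large_A[of A B] region_poly_pos[of A B] assms
    by (cases "9/10 \<le> A") linarith+
qed

lemma far_case_sin_bound_imp:
  fixes A B U :: real
  assumes "0 < A" "A \<le> 1" "0 < B" "B \<le> 1" "0 \<le> U" "U \<le> 3/10"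
    and sin_bound: "(A+B)*((157/50)*(1/2-U) - (517/100)*(1/2-U)^3)
      \<le> B - A + (247/50)*A*(1-B^2)*(U + (1-A^2)/(A*(A+B)))^2"
  shows "A*(A+B)^3*(7333/12500)
    \<le> (B-A)*A*(A+B)^2 + (247/50)*(1-B^2)*((3/10)*A*(A+B) + (1-A^2))^2"
proof -
  define S Q w where "S = A + B" and "Q = (1-A^2)/(A*(A+B))" and "w = 1/2 - U"
  have S0: "0 < S"
    using assms by (simp add: S_def)
  have Q0: "0 \<le> Q"
    using assms by (simp add: Q_def power_le_one)
  have AQS: "A*S*Q = 1 - A^2"
    using assms by (simp add: Q_def S_def)
  have c0: "0 \<le> (247/50)*A*(1-B^2)"
    using assms by (simp add: power_le_one)
  have w: "1/5 \<le> w" "w \<le> 1/2"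
    using assms by (auto simp: w_def)
  then have "w^2 \<le> 1/4"
    using power_mono[of w "1/2" 2] by (simp add: power2_eq_square)
  then have "0 \<le> (w - 1/5)*(157/50 - 517/100*(w^2 + w/5 + 1/25))"
    using w by (intro mult_nonneg_nonneg) auto
  also have "\<dots> = (157/50)*w - (517/100)*w^3 - 7333/12500"
    by algebra
  finally have "S*(7333/12500) \<le> S*((157/50)*w - (517/100)*w^3)"
    using S0 by simp
  also have "\<dots> \<le> B - A + (247/50)*A*(1-B^2)*(U + Q)^2"
    using sin_bound by (simp add: S_def Q_def w_def)
  also have "\<dots> \<le> B - A + (247/50)*A*(1-B^2)*(3/10 + Q)^2"
    using assms Q0 by (intro add_left_mono mult_left_mono[OF _ c0] power_mono) auto
  finally have "(A*S^2)*(S*(7333/12500)) \<le> (A*S^2)*(B - A + (247/50)*A*(1-B^2)*(3/10 + Q)^2)"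
    using assms by (intro mult_left_mono) auto
  also have "\<dots> = (B-A)*A*S^2 + (247/50)*(1-B^2)*((3/10)*A*S + A*S*Q)^2"
    by algebra
  finally show ?thesis
    unfolding AQS by (simp add: S_def power2_eq_square power3_eq_cube mult_ac)
qed

lemma near_case_sin_bound_imp:
  fixes A B U :: real
  assumes "0 < A" "A \<le> 1" "0 < B" "B \<le> 1" "3/10 \<le> U" "U \<le> 1/2"
    and sin_bound: "(A+B)*((157/50)*(1/2-U) - (517/100)*(1/2-U)^3)
      \<le> B - A + (247/50)*A*(1-B^2)*(U + (1-A^2)/(A*(A+B)))^2"
  shows "4*(2 + A*B - B^2)*A*(A+B)*(1/2 - U)
    \<le> 4*(1-A^2)*(2+A*B-B^2) + 2*A*(A+B)*(2+A*B-B^2) - (A+B)*(3+A*B)"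
proof -
  define S Q w D where "S = A + B" and "Q = (1-A^2)/(A*(A+B))" and "w = 1/2 - U"
    and "D = 2 + A*B - B^2"
  have S0: "0 < S"
    using assms by (simp add: S_def)
  have D0: "0 < D"
    using assms objective_factor_pos[of A B] by (simp add: D_def)
  have Q0: "0 \<le> Q"
    using assms by (simp add: Q_def power_le_one)
  have AQS: "A*S*Q = 1 - A^2"
    using assms by (simp add: Q_def S_def)
  have c0: "0 \<le> (247/50)*A*(1-B^2)"
    using assms by (simp add: power_le_one)
  have w0: "0 \<le> w" and w15: "w \<le> 1/5"
    using assms by (auto simp: w_def)
  \<comment> \<open>\<open>Lam * w \<le> K\<close> is the sine bound linearised via \<open>w\<^sup>3 \<le> w/25\<close> and \<open>w\<^sup>2 \<le> w/5\<close>.\<close>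
  define Lam K where "Lam = S*(7333/2500) + (247/50)*A*(1-B^2)*(4/5 + 2*Q)"
    and "K = B - A + (247/50)*A*(1-B^2)*(1/2 + Q)^2"
  have w2: "w*w \<le> w/5"
    using mult_left_mono[OF w15 w0] by simp
  have "w^3 = w*(w*w)"
    by (simp add: power3_eq_cube)
  also have "\<dots> \<le> w*(w/5)"
    using w2 w0 by (rule mult_left_mono)
  also have "\<dots> \<le> w/25"
    using w2 by simp
  finally have "S*((7333/2500)*w) \<le> S*((157/50)*w - (517/100)*w^3)"
    using S0 by (intro mult_left_mono) auto
  also have "\<dots> \<le> B - A + (247/50)*A*(1-B^2)*(1/2 - w + Q)^2"
    using sin_bound by (simp add: S_def Q_def w_def)
  also have "\<dots> \<le> B - A + (247/50)*A*(1-B^2)*((1/2 + Q)^2 - (4/5 + 2*Q)*w)"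
    using w2 by (intro add_left_mono mult_left_mono[OF _ c0]) (simp add: power2_eq_square algebra_simps)
  finally have "S*((7333/2500)*w) \<le> B - A + (247/50)*A*(1-B^2)*((1/2 + Q)^2 - (4/5 + 2*Q)*w)" .
  moreover have "Lam * w - K
      = S*((7333/2500)*w) - (B - A + (247/50)*A*(1-B^2)*((1/2 + Q)^2 - (4/5 + 2*Q)*w))"
    unfolding Lam_def K_def by algebra
  ultimately have LK: "Lam * w \<le> K"
    by linarith
  have LS: "Lam*S = (A+B)^2*(7333/2500) + (247/50)*(1-B^2)*((4/5)*A*(A+B) + 2*(1-A^2))"
  proof -
    have "Lam*S = S^2*(7333/2500) + (247/50)*(1-B^2)*((4/5)*A*S + 2*(A*S*Q))"
      unfolding Lam_def by algebra
    then show ?thesis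
      unfolding AQS by (simp add: S_def)
  qed
  have KA: "K*(A*S^2) = (B-A)*A*(A+B)^2 + (247/50)*(1-B^2)*((1/2)*A*(A+B) + (1-A^2))^2"
  proof -
    have "K*(A*S^2) = (B-A)*A*S^2 + (247/50)*(1-B^2)*((1/2)*A*S + A*S*Q)^2"
      unfolding K_def by algebra
    then show ?thesis
      unfolding AQS by (simp add: S_def)
  qed
  have "(Lam*S)*(4*D*A*S*w) \<le> (Lam*S)*(4*(1-A^2)*D + 2*A*S*D - S*(3+A*B))"
  proof -
    have "(Lam*S)*(4*D*A*S*w) = 4*D*(A*S^2)*(Lam*w)"
      by algebra
    also have "\<dots> \<le> 4*D*(A*S^2)*K"
      using LK D0 assms S0 by (intro mult_left_mono) auto
    also have "\<dots> = 4*D*(K*(A*S^2))"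
      by simp
    also have "\<dots> \<le> (Lam*S)*(4*(1-A^2)*D + 2*A*S*D - S*(3+A*B))"
    proof -
      have "0 \<le> (Lam*S)*(4*(1-A^2)*D + 2*A*S*D - S*(3+A*B)) - 4*D*(K*(A*S^2))"
        unfolding KA LS unfolding D_def S_def using assms by (intro linearised_margin_poly_nonneg) auto
      then show ?thesis
        by linarith
    qed
    finally show ?thesis .
  qed
  moreover have "0 < Lam * S"
    using S0 Q0 c0 by (simp add: Lam_def add_pos_nonneg)
  ultimately have "4*D*A*S*w \<le> 4*(1-A^2)*D + 2*A*S*D - S*(3+A*B)"
    by (rule mult_left_le_imp_le)
  then show ?thesis
    by (simp add: S_def D_def w_def algebra_simps)
qed

lemma objective_lower_bound:
  fixes A B U :: real
  assumes "0 < A" "A \<le> 1" "0 < B" "B \<le> 1" "LL A B \<le> U" "GG A B U = 0"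
  shows "sqrt (2*(1 + A*B)) / 2 \<le> (A+B)*U + B * kap A * MM A B U + A * eps B * NN A B U"
proof -
  have "4*(2 + A*B - B^2)*A*(A+B)*(1/2 - U)
      \<le> 4*(1-A^2)*(2+A*B-B^2) + 2*A*(A+B)*(2+A*B-B^2) - (A+B)*(3+A*B)"
  proof (cases "1/2 \<le> U")
    case True
    have "0 \<le> 4*(2 + A*B - B^2)*A*(A+B)"
      using assms objective_factor_pos[of A B] by (intro mult_nonneg_nonneg) auto
    then have "4*(2 + A*B - B^2)*A*(A+B)*(1/2 - U) \<le> 0"
      using True by (intro mult_nonneg_nonpos) auto
    also have "0 \<le> 4*(1-A^2)*(2+A*B-B^2) + 2*A*(A+B)*(2+A*B-B^2) - (A+B)*(3+A*B)"
      using assms by (intro margin_poly_nonneg) auto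
    finally show ?thesis .
  next
    case False
    have "0 \<le> U"
      using LL_nonneg[of A B] assms by linarith
    have sin_bound: "(A+B)*((157/50)*(1/2-U) - (517/100)*(1/2-U)^3)
        \<le> B - A + (247/50)*A*(1-B^2)*(U + (1-A^2)/(A*(A+B)))^2"
      using GG_zero_imp_sin_bound[of A B U] NN_squared[of A B U] False assms by simp
    have "\<not> U \<le> 3/10"
    proof
      assume far: "U \<le> 3/10"
      have "4/5 \<le> A" "(1-A^2)*(1+A*B)^2 \<le> (9/25)*B^2*(A+B)^2"
        using LL_le_imp_region[of A B] far assms by auto
      moreover have "A*(A+B)^3*(7333/12500)
          \<le> (B-A)*A*(A+B)^2 + (247/50)*(1-B^2)*((3/10)*A*(A+B) + (1-A^2))^2"
        using far_case_sin_bound_imp[of A B U] sin_bound far \<open>0 \<le> U\<close> assms by blast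
      ultimately show False
        using far_case_impossible[of A B] assms by auto
    qed
    then show ?thesis
      using near_case_sin_bound_imp[of A B U] sin_bound False assms by auto
  qed
  then have "(3 + A*B)/4 \<le> (A+B)*U + B * kap A * MM A B U + A * eps B * NN A B U"
    using quarter_le_objective_iff[of A B U] objective_eq[of A B U] assms by simp
  moreover have "sqrt (2*(1 + A*B)) / 2 \<le> (3 + A*B)/4"
    using mult_pos_pos[OF assms(1,3)] by (intro sqrt_two_mult_le) linarith
  ultimately show ?thesis
    by linarith
qed

lemma MM_swap:
  assumes "0 < A" "A \<le> 1" "0 < B" "B \<le> 1"
  shows "MM B A (1-U) = NN A B U"
  using assms by (simp add: MM_def NN_def PP_swap_eq kap_squared eps_eq_kap)

lemma NN_swap:
  assumes "0 < A" "A \<le> 1" "0 < B" "B \<le> 1"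
  shows "NN B A (1-U) = MM A B U"
  using assms by (simp add: MM_def NN_def PP_swap_eq[of B A] kap_squared eps_eq_kap add.commute)

lemma LL_swap:
  assumes "0 < A" "A \<le> 1" "0 < B" "B \<le> 1"
  shows "LL B A = 1 - RR A B"
proof -
  define k q where "k = kap B" and "q = (1-A^2)/(A*(A+B))"
  have "1 + k \<noteq> 0"
    using assms kap_nonneg[of B] by (simp add: k_def)
  have "LL B A = k/(1+k) * (1+q)"
    using assms by (simp add: LL_def PP_def[symmetric] PP_swap_eq k_def q_def)
  moreover have "RR A B = (1 - k*q)/(1+k)"
    using assms by (simp add: RR_def eps_eq_kap kap_squared k_def q_def)
  moreover have "k/(1+k) * (1+q) = 1 - (1 - k*q)/(1+k)"
    using \<open>1 + k \<noteq> 0\<close> by (simp add: field_simps)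
  ultimately show ?thesis
    by simp
qed

lemma GG_swap:
  assumes "0 < A" "A \<le> 1" "0 < B" "B \<le> 1"
  shows "GG B A (1-U) = - GG A B U"
  using assms by (simp add: GG_def MM_swap NN_swap algebra_simps cos_diff)

theorem mainTheorem9:
  fixes A B U :: real
  assumes "0 < A" "A \<le> 1" "0 < B" "B \<le> 1"
    and "B \<ge> B0 A"
    and "GG A B U = 0"
    and "LL A B \<le> U" "U \<le> RR A B"
  shows "(A+B)*(1-U) + B * kap A * MM A B U + A * eps B * NN A B U \<ge> sqrt (2*(1 + A*B)) / 2 \<and>
         (A+B)*U + B * kap A * MM A B U + A * eps B * NN A B U \<ge> sqrt (2*(1 + A*B)) / 2"
proof
  show "(A+B)*U + B * kap A * MM A B U + A * eps B * NN A B U \<ge> sqrt (2*(1 + A*B)) / 2"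
    using objective_lower_bound assms by blast
next
  have "LL B A \<le> 1 - U" "GG B A (1-U) = 0"
    using assms LL_swap GG_swap by auto
  then have "sqrt (2*(1 + B*A)) / 2
      \<le> (B+A)*(1-U) + A * kap B * MM B A (1-U) + B * eps A * NN B A (1-U)"
    using objective_lower_bound[of B A "1-U"] assms by blast
  then show "(A+B)*(1-U) + B * kap A * MM A B U + A * eps B * NN A B U \<ge> sqrt (2*(1 + A*B)) / 2"
    using assms by (simp add: MM_swap NN_swap eps_eq_kap algebra_simps)
qed

end
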